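(* Let $\mathbb{A}\in\mathbb{C}^{n\times n}$, $\mathbf{f}_1\in\mathbb{C}^n$, and $\mathbf{f}_{i+1}=\mathbb{A}\mathbf{f}_i$ for $i=1,\dots,m$. Assume $\mathbf{X}_m=(\mathbf{f}_1,\dots,\mathbf{f}_m)\in\mathbb{C}^{n\times m}$ has full column rank, and let $\mathcal{K}_m=\operatorname{span}\{\mathbf{f}_1,\dots,\mathbf{f}_m\}$. Let $\mathbf{c}=(c_1,\dots,c_m)^T=\mathbf{X}_m^{\dagger}\mathbf{f}_{m+1}$ (the least squares coefficients) and $\mathbf{r}_{m+1}=\mathbf{f}_{m+1}-\mathbf{X}_m\mathbf{c}$. Let $C_m$ be the $m\times m$ companion matrix with ones on the first subdiagonal, last column equal to $\mathbf{c}$, and zeros elsewhere, so that $\mathbb{A}\mathbf{X}_m=\mathbf{X}_mC_m+\mathbf{r}_{m+1}\mathbf{e}_m^T$ with $\mathbf{e}_m=(0,\dots,0,1)^T$. Assume the eigenvalues $\lambda_1,\dots,\lambda_m$ of $C_m$ are pairwise distinct, and let $\mathbb{V}_m=(\lambda_i^{j-1})_{i,j=1}^m$ be the corresponding Vandermonde matrix. Then the columns of $\widehat{W}_m=\mathbf{X}_m\mathbb{V}_m^{-1}$ are Ritz vectors of $\mathbb{A}$ with respect to $\mathcal{K}_m$, the $j$-th column $\widehat{W}_m(:,j)$ having Ritz value $\lambda_j$, and for each $j=1,\dots,m$, $$\frac{\|\mathbb{A}\widehat{W}_m(:,j)-\lambda_j\widehat{W}_m(:,j)\|_2}{\|\widehat{W}_m(:,j)\|_2}=\frac{\|\mathbf{r}_{m+1}\|_2}{\|\widehat{W}_m(:,j)\|_2}\prod_{k=1,k\neq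 j}^m\frac{1}{|\lambda_j-\lambda_k|}.$$
   Context: $\mathbf{X}_m^\dagger$ denotes the Moore–Penrose pseudoinverse, so $\mathbf{X}_m^*\mathbf{r}_{m+1}=0$. A pair $(\lambda,w)$ with $0\neq w\in\mathcal{K}_m$ is a Ritz pair (Ritz value $\lambda$, Ritz vector $w$) of $\mathbb{A}$ with respect to $\mathcal{K}_m$ if $\mathbb{A}w-\lambda w$ is orthogonal to $\mathcal{K}_m$, i.e. $\lambda$ is an eigenvalue of the Rayleigh quotient $\mathbf{X}_m^\dagger\mathbb{A}\mathbf{X}_m=C_m$ and $w=\mathbf{X}_m y$ for a corresponding eigenvector $y$. *)

theory Defs
  imports "Jordan_Normal_Form.Jordan_Normal_Form" "Jordan_Normal_Form.Schur_Decomposition"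
    "Jordan_Normal_Form.DL_Rank"
begin

text \<open>Krylov vectors, 0-indexed: krylov A f1 i = A^i f1 is the paper's f_(i+1).\<close>
definition krylov :: "complex mat \<Rightarrow> complex vec \<Rightarrow> nat \<Rightarrow> complex vec" where
  "krylov A f1 i = (A ^\<^sub>m i) *\<^sub>v f1"

definition krylov_mat :: "nat \<Rightarrow> complex mat \<Rightarrow> complex vec \<Rightarrow> nat \<Rightarrow> complex mat" where
  "krylov_mat n A f1 m = mat_of_cols n (map (krylov A f1) [0..<m])"

definition pinv :: "complex mat \<Rightarrow> complex mat" where
  "pinv X = (THE Y. Y \<in> carrier_mat (dim_col X) (dim_row X) \<and>
       X * Y * X = X \<and> Y * X * Y = Y \<and>
       mat_adjoint (X * Y) = X * Y \<and> mat_adjoint (Y * X) = Y * X)"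

definition mat_inv :: "complex mat \<Rightarrow> complex mat" where
  "mat_inv V = (THE B. B \<in> carrier_mat (dim_row V) (dim_row V) \<and> inverts_mat V B \<and> inverts_mat B V)"

definition companion :: "nat \<Rightarrow> complex vec \<Rightarrow> complex mat" where
  "companion m c = mat m m (\<lambda>(i, j). if j = m - 1 then c $ i else if i = j + 1 then 1 else 0)"

definition vandermonde :: "nat \<Rightarrow> (nat \<Rightarrow> complex) \<Rightarrow> complex mat" where
  "vandermonde m lam = mat m m (\<lambda>(i, j). lam i ^ j)"

definition vnorm2 :: "complex vec \<Rightarrow> real" where
  "vnorm2 v = sqrt (\<Sum>i<dim_vec v. (cmod (v $ i))\<^sup>2)"

definition col_space :: "complex mat \<Rightarrow> complex vec set" where
  "col_space X = {X *\<^sub>v y | y. y \<in> carrier_vec (dim_col X)}"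

definition ritz_pair :: "complex mat \<Rightarrow> complex vec set \<Rightarrow> complex \<Rightarrow> complex vec \<Rightarrow> bool" where
  "ritz_pair A K lam w \<longleftrightarrow> w \<in> K \<and> w \<noteq> 0\<^sub>v (dim_vec w) \<and>
     (\<forall>u\<in>K. (A *\<^sub>v w - lam \<cdot>\<^sub>v w) \<bullet>c u = 0)"

end

theory Submission
  imports Defs
begin

(* Full column rank makes the Gram matrix X^H X invertible, so pinv X = (X^H X)^-1 X^H and the
   least-squares residual r is orthogonal to K_m.  For every coefficient vector b the Krylov
   relation A (X b) = X (C b) + b_m r holds.  Each eigenvalue of C is a root of
   x^m - sum_k c_k x^k, which makes the rows (1, lam_i, ..., lam_i^(m-1)) of the Vandermonde
   matrix V left eigenvectors of C; hence the columns b_j of V^-1, the coefficient vectors of the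
   Lagrange basis polynomials l_j, satisfy C b_j = lam_j b_j.  For w_j = X b_j this gives
   A w_j - lam_j w_j = b_jm r, which is orthogonal to K_m, and b_jm is the leading coefficient
   1 / prod_(k ~= j) (lam_j - lam_k) of l_j. *)

lemma mat_adjoint_dim [simp]:
  "dim_row (mat_adjoint A) = dim_col A" "dim_col (mat_adjoint A) = dim_row A"
  unfolding mat_adjoint_def by simp_all

lemma mat_adjoint_carrier: "A \<in> carrier_mat n m \<Longrightarrow> mat_adjoint A \<in> carrier_mat m n"
  by auto

lemma mat_adjoint_index [simp]:
  assumes "i < dim_col A" "j < dim_row A"
  shows "mat_adjoint A $$ (i, j) = conjugate (A $$ (j, i))"
  unfolding mat_adjoint_def using assms by (subst mat_of_rows_index) auto

lemma mat_adjoint_adjoint [simp]: "mat_adjoint (mat_adjoint A) = A"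
  by (rule eq_matI) simp_all

lemma mat_adjoint_one [simp]: "mat_adjoint (1\<^sub>m n :: complex mat) = 1\<^sub>m n"
  by (rule eq_matI) auto

lemma mat_adjoint_mult:
  fixes A :: "'a :: conjugatable_field mat"
  assumes A: "A \<in> carrier_mat n k" and B: "B \<in> carrier_mat k m"
  shows "mat_adjoint (A * B) = mat_adjoint B * mat_adjoint A"
proof (rule eq_matI)
  fix i j assume "i < dim_row (mat_adjoint B * mat_adjoint A)" "j < dim_col (mat_adjoint B * mat_adjoint A)"
  then have i: "i < m" and j: "j < n" using A B by auto
  have "mat_adjoint (A * B) $$ (i, j) = conjugate (\<Sum>l<k. A $$ (j, l) * B $$ (l, i))"
    using A B i j by (simp add: scalar_prod_def lessThan_atLeast0)
  also have "\<dots> = (\<Sum>l<k. conjugate (B $$ (l, i)) * conjugate (A $$ (j, l)))"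
    by (simp add: sum_conjugate conjugate_dist_mul mult.commute)
  also have "\<dots> = (mat_adjoint B * mat_adjoint A) $$ (i, j)"
    using A B i j by (simp add: scalar_prod_def lessThan_atLeast0)
  finally show "mat_adjoint (A * B) $$ (i, j) = (mat_adjoint B * mat_adjoint A) $$ (i, j)" .
qed (use A B in simp_all)

lemma cscalar_prod_mult_mat_vec:
  fixes X :: "'a :: conjugatable_field mat"
  assumes X: "X \<in> carrier_mat n m" and v: "v \<in> carrier_vec n" and w: "w \<in> carrier_vec m"
  shows "v \<bullet>c (X *\<^sub>v w) = (mat_adjoint X *\<^sub>v v) \<bullet>c w"
proof -
  have "v \<bullet>c (X *\<^sub>v w) = (\<Sum>a<n. \<Sum>i<m. v $ a * conjugate (X $$ (a, i)) * conjugate (w $ i))"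
    using X v w by (simp add: scalar_prod_def sum_conjugate conjugate_dist_mul sum_distrib_left
        mult.assoc lessThan_atLeast0)
  also have "\<dots> = (\<Sum>i<m. \<Sum>a<n. v $ a * conjugate (X $$ (a, i)) * conjugate (w $ i))"
    by (rule sum.swap)
  also have "\<dots> = (mat_adjoint X *\<^sub>v v) \<bullet>c w"
    using X v w by (simp add: scalar_prod_def sum_distrib_left mult.commute lessThan_atLeast0)
  finally show ?thesis .
qed

lemma mat_adjoint_mult_eq_zero:
  fixes X :: "complex mat"
  assumes X: "X \<in> carrier_mat n m" and v: "v \<in> carrier_vec m"
    and zero: "mat_adjoint X *\<^sub>v (X *\<^sub>v v) = 0\<^sub>v m"
  shows "X *\<^sub>v v = 0\<^sub>v n"
proof -
  have "(X *\<^sub>v v) \<bullet>c (X *\<^sub>v v) = 0"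
    using cscalar_prod_mult_mat_vec[OF X _ v] X v zero by simp
  then show ?thesis using conjugate_square_eq_0_vec[of "X *\<^sub>v v" n] X v by simp
qed

lemma (in vec_space) full_column_rank_mult_vec_eq_zero:
  assumes X: "X \<in> carrier_mat n nc" and rank: "rank X = nc"
    and v: "v \<in> carrier_vec nc" and zero: "X *\<^sub>v v = 0\<^sub>v n"
  shows "v = 0\<^sub>v nc"
proof (rule ccontr)
  assume v0: "v \<noteq> 0\<^sub>v nc"
  have "distinct (cols X)"
  proof (rule ccontr)
    assume "\<not> distinct (cols X)"
    obtain S where S: "maximal S (\<lambda>T. T \<subseteq> set (cols X) \<and> lin_indpt T)"
      using maximal_exists[of "\<lambda>T. T \<subseteq> set (cols X) \<and> lin_indpt T" "card (set (cols X))" "{}"]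
      by (meson List.finite_set card_mono empty_iff empty_subsetI finite_lin_indpt2 rev_finite_subset)
    then have "card S \<le> card (set (cols X))" by (simp add: card_mono maximal_def)
    also have "\<dots> < length (cols X)"
      using \<open>\<not> distinct (cols X)\<close> card_distinct by (metis card_length le_neq_implies_less)
    finally have "card S < nc" using X by simp
    then show False using rank rank_card_indpt[OF X S] by simp
  qed
  then show False
    using full_rank_lin_indpt[OF X rank] lin_depI[OF X v v0 zero] by simp
qed

lemma inverse_hermitian_mat:
  fixes G :: "complex mat"
  assumes G: "G \<in> carrier_mat m m" and Gi: "Gi \<in> carrier_mat m m"
    and inv: "G * Gi = 1\<^sub>m m" and hermitian: "mat_adjoint G = G"
  shows "mat_adjoint Gi = Gi"
proof -
  have "mat_adjoint Gi * G = 1\<^sub>m m"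
    using mat_adjoint_mult[OF G Gi] inv hermitian by simp
  then have "mat_adjoint Gi * G * Gi = Gi" using Gi by simp
  moreover have "mat_adjoint Gi * G * Gi = mat_adjoint Gi"
    using assoc_mult_mat[OF mat_adjoint_carrier[OF Gi] G Gi] inv Gi by simp
  ultimately show ?thesis by simp
qed

lemma gram_mat_invertible:
  fixes X :: "complex mat"
  assumes X: "X \<in> carrier_mat n m"
    and rank: "vec_space.rank n X = m"
  obtains Gi where "Gi \<in> carrier_mat m m"
    "Gi * (mat_adjoint X * X) = 1\<^sub>m m" "(mat_adjoint X * X) * Gi = 1\<^sub>m m"
proof -
  let ?G = "mat_adjoint X * X"
  note inj = vec_space.full_column_rank_mult_vec_eq_zero[OF X rank]
  have G: "?G \<in> carrier_mat m m" using mat_adjoint_carrier[OF X] X by (rule mult_carrier_mat)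
  have "det ?G \<noteq> 0"
  proof
    assume "det ?G = 0"
    then obtain v where v: "v \<in> carrier_vec m" "v \<noteq> 0\<^sub>v m" "?G *\<^sub>v v = 0\<^sub>v m"
      using det_0_iff_vec_prod_zero_field[OF G] by blast
    then have "mat_adjoint X *\<^sub>v (X *\<^sub>v v) = 0\<^sub>v m"
      using X by (metis assoc_mult_mat_vec mat_adjoint_carrier)
    then show False using mat_adjoint_mult_eq_zero[OF X v(1)] inj v by blast
  qed
  from det_non_zero_imp_unit[OF G this, of "()"] show thesis
    using that unfolding Units_def ring_mat_def by auto
qed

lemma least_squares_inverse_unique:
  fixes X :: "complex mat"
  assumes X: "X \<in> carrier_mat n m" and Gi: "Gi \<in> carrier_mat m m"
    and left: "Gi * (mat_adjoint X * X) = 1\<^sub>m m"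
    and Z: "Z \<in> carrier_mat m n" and XZX: "X * Z * X = X"
    and XZ_hermitian: "mat_adjoint (X * Z) = X * Z"
  shows "Z = Gi * mat_adjoint X"
proof -
  have XH: "mat_adjoint X \<in> carrier_mat m n" using X by (rule mat_adjoint_carrier)
  have G: "mat_adjoint X * X \<in> carrier_mat m m" using XH X by (rule mult_carrier_mat)
  \<comment> \<open>The first and third Penrose conditions alone force the normal equations
    \<open>X\<^sup>H X Z = X\<^sup>H\<close>.\<close>
  have "mat_adjoint X = mat_adjoint (X * Z * X)" unfolding XZX ..
  also have "\<dots> = mat_adjoint X * (X * Z)"
    using mat_adjoint_mult[of "X * Z" n n X m] X Z XZ_hermitian by simp
  also have "\<dots> = (mat_adjoint X * X) * Z" using XH X Z by (simp add: assoc_mult_mat)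
  finally have "Gi * mat_adjoint X = (Gi * (mat_adjoint X * X)) * Z"
    using Gi G Z by (simp add: assoc_mult_mat)
  then show ?thesis using left Z by simp
qed

lemma pinv_eq_gram_inverse_mult_adjoint:
  fixes X :: "complex mat"
  assumes X: "X \<in> carrier_mat n m" and Gi: "Gi \<in> carrier_mat m m"
    and left: "Gi * (mat_adjoint X * X) = 1\<^sub>m m" and right: "(mat_adjoint X * X) * Gi = 1\<^sub>m m"
  shows "pinv X = Gi * mat_adjoint X"
proof -
  define XH where "XH = mat_adjoint X"
  define Y where "Y = Gi * XH"
  have XH: "XH \<in> carrier_mat m n" unfolding XH_def using X by (rule mat_adjoint_carrier)
  have Y: "Y \<in> carrier_mat m n" unfolding Y_def using Gi XH by simp
  have G: "XH * X \<in> carrier_mat m m" using XH X by simp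
  have Gi_hermitian: "mat_adjoint Gi = Gi"
    using inverse_hermitian_mat[OF G Gi right[folded XH_def]] mat_adjoint_mult[OF XH X]
    unfolding XH_def by simp
  have YX: "Y * X = 1\<^sub>m m"
    unfolding Y_def using assoc_mult_mat[OF Gi XH X] left unfolding XH_def by simp
  have "X * Y * X = X" using assoc_mult_mat[OF X Y X] YX X by simp
  moreover have "Y * X * Y = Y" using YX Y by simp
  moreover have "mat_adjoint (X * Y) = X * Y"
  proof -
    have "mat_adjoint (X * Y) = mat_adjoint Y * XH"
      using mat_adjoint_mult[OF X Y] unfolding XH_def .
    also have "mat_adjoint Y = X * Gi"
      using mat_adjoint_mult[OF Gi XH] unfolding Y_def Gi_hermitian XH_def by simp
    finally show ?thesis unfolding Y_def using X Gi XH by (simp add: assoc_mult_mat)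
  qed
  moreover have "mat_adjoint (Y * X) = Y * X" unfolding YX by simp
  moreover have "Z = Y"
    if "Z \<in> carrier_mat m n" "X * Z * X = X" "mat_adjoint (X * Z) = X * Z" for Z
    using least_squares_inverse_unique[OF X Gi left that] unfolding Y_def XH_def .
  ultimately show ?thesis
    unfolding pinv_def Y_def[symmetric] XH_def[symmetric] using X Y
    by (intro the_equality) blast+
qed

lemma pinv_normal_equations:
  fixes X :: "complex mat"
  assumes X: "X \<in> carrier_mat n m"
    and rank: "vec_space.rank n X = m"
  shows "pinv X \<in> carrier_mat m n" "mat_adjoint X * X * pinv X = mat_adjoint X"
proof -
  obtain Gi where Gi: "Gi \<in> carrier_mat m m" and left: "Gi * (mat_adjoint X * X) = 1\<^sub>m m"
    and right: "(mat_adjoint X * X) * Gi = 1\<^sub>m m"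
    using gram_mat_invertible[OF X rank] by blast
  have XH: "mat_adjoint X \<in> carrier_mat m n" using X by (rule mat_adjoint_carrier)
  have pinv: "pinv X = Gi * mat_adjoint X"
    using pinv_eq_gram_inverse_mult_adjoint[OF X Gi left right] .
  show "pinv X \<in> carrier_mat m n" unfolding pinv using Gi XH by simp
  have G: "mat_adjoint X * X \<in> carrier_mat m m" using XH X by (rule mult_carrier_mat)
  show "mat_adjoint X * X * pinv X = mat_adjoint X"
    unfolding pinv assoc_mult_mat[OF G Gi XH, symmetric] right by (rule left_mult_one_mat[OF XH])
qed

lemma least_squares_residual_orthogonal:
  fixes X :: "complex mat"
  assumes X: "X \<in> carrier_mat n m" and f: "f \<in> carrier_vec n"
    and rank: "vec_space.rank n X = m"
  shows "mat_adjoint X *\<^sub>v (f - X *\<^sub>v (pinv X *\<^sub>v f)) = 0\<^sub>v m"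
proof -
  have XH: "mat_adjoint X \<in> carrier_mat m n" using X by (rule mat_adjoint_carrier)
  note Y = pinv_normal_equations[OF X rank]
  have G: "mat_adjoint X * X \<in> carrier_mat m m" using XH X by (rule mult_carrier_mat)
  have Yf: "pinv X *\<^sub>v f \<in> carrier_vec m" using Y(1) f by (rule mult_mat_vec_carrier)
  have "mat_adjoint X *\<^sub>v (X *\<^sub>v (pinv X *\<^sub>v f)) = (mat_adjoint X * X * pinv X) *\<^sub>v f"
    by (simp only: assoc_mult_mat_vec[OF G Y(1) f] assoc_mult_mat_vec[OF XH X Yf])
  also have "\<dots> = mat_adjoint X *\<^sub>v f" by (simp only: Y(2))
  finally have "mat_adjoint X *\<^sub>v (X *\<^sub>v (pinv X *\<^sub>v f)) = mat_adjoint X *\<^sub>v f" .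
  then show ?thesis
    using XH X Y(1) f by (simp add: mult_minus_distrib_mat_vec)
qed

lemma mat_inv_eqI:
  assumes V: "V \<in> carrier_mat m m" and B: "B \<in> carrier_mat m m" and VB: "V * B = 1\<^sub>m m"
  shows "mat_inv V = B"
proof -
  have BV: "B * V = 1\<^sub>m m" using mat_mult_left_right_inverse[OF V B VB] .
  show ?thesis unfolding mat_inv_def
  proof (rule the_equality)
    show "B \<in> carrier_mat (dim_row V) (dim_row V) \<and> inverts_mat V B \<and> inverts_mat B V"
      using V B VB BV unfolding inverts_mat_def by simp
  next
    fix B' assume "B' \<in> carrier_mat (dim_row V) (dim_row V) \<and> inverts_mat V B' \<and> inverts_mat B' V"
    then have B': "B' \<in> carrier_mat m m" and B'V: "B' * V = 1\<^sub>m m"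
      using V unfolding inverts_mat_def by auto
    have "B' = B' * (V * B)" using VB B' by simp
    also have "\<dots> = B" using assoc_mult_mat[OF B' V B] B'V B by simp
    finally show "B' = B" .
  qed
qed

definition lagrange_basis :: "('b \<Rightarrow> 'a :: field) \<Rightarrow> 'b set \<Rightarrow> 'b \<Rightarrow> 'a poly" where
  "lagrange_basis x S j =
     Polynomial.smult (1 / (\<Prod>k\<in>S - {j}. x j - x k)) (\<Prod>k\<in>S - {j}. [:- x k, 1:])"

lemma degree_lagrange_basis:
  assumes "finite S" "j \<in> S"
  shows "degree (lagrange_basis x S j) < card S"
proof -
  have "degree (lagrange_basis x S j) \<le> degree (\<Prod>k\<in>S - {j}. [:- x k, 1:])"
    unfolding lagrange_basis_def by (rule degree_smult_le)
  also have "\<dots> = card (S - {j})" by (subst degree_prod_eq_sum_degree) auto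
  also have "\<dots> < card S" using assms by (rule card_Diff1_less)
  finally show ?thesis .
qed

lemma poly_lagrange_basis:
  assumes "finite S" "inj_on x S" "j \<in> S" "k \<in> S"
  shows "poly (lagrange_basis x S j) (x k) = (if k = j then 1 else 0)"
proof -
  have "(\<Prod>l\<in>S - {j}. x j - x l) \<noteq> 0"
    using assms by (auto simp: inj_on_def)
  then show ?thesis
    using assms by (auto simp: lagrange_basis_def poly_prod)
qed

lemma coeff_lagrange_basis_top:
  assumes "finite S" "j \<in> S"
  shows "coeff (lagrange_basis x S j) (card S - 1) = 1 / (\<Prod>k\<in>S - {j}. x j - x k)"
proof -
  have "degree (\<Prod>k\<in>S - {j}. [:- x k, 1:]) = card S - 1"
    using assms by (subst degree_prod_eq_sum_degree) auto
  moreover have "lead_coeff (\<Prod>k\<in>S - {j}. [:- x k, 1:]) = 1"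
    by (simp add: lead_coeff_prod)
  ultimately show ?thesis by (simp add: lagrange_basis_def)
qed

definition lagrange_mat :: "nat \<Rightarrow> (nat \<Rightarrow> complex) \<Rightarrow> complex mat" where
  "lagrange_mat m x = mat m m (\<lambda>(i, j). coeff (lagrange_basis x {..<m} j) i)"

lemma lagrange_mat_carrier: "lagrange_mat m x \<in> carrier_mat m m"
  by (simp add: lagrange_mat_def)

lemma col_lagrange_mat:
  "j < m \<Longrightarrow> col (lagrange_mat m x) j = vec m (coeff (lagrange_basis x {..<m} j))"
  by (auto simp: lagrange_mat_def)

lemma vandermonde_mult_coeffs:
  assumes "degree p < m" "i < m"
  shows "(vandermonde m x *\<^sub>v vec m (coeff p)) $ i = poly p (x i)"
proof -
  have "(vandermonde m x *\<^sub>v vec m (coeff p)) $ i = (\<Sum>k<m. coeff p k * x i ^ k)"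
    using assms by (simp add: vandermonde_def scalar_prod_def lessThan_atLeast0 mult.commute)
  also have "\<dots> = poly p (x i)"
    unfolding poly_altdef using assms by (intro sum.mono_neutral_right) (auto simp: coeff_eq_0)
  finally show ?thesis .
qed

lemma vandermonde_mult_lagrange_mat:
  assumes "inj_on x {..<m}"
  shows "vandermonde m x * lagrange_mat m x = 1\<^sub>m m"
proof (rule eq_matI)
  fix i j assume "i < dim_row (1\<^sub>m m :: complex mat)" "j < dim_col (1\<^sub>m m :: complex mat)"
  then have i: "i < m" and j: "j < m" by auto
  have "(vandermonde m x * lagrange_mat m x) $$ (i, j) =
      (vandermonde m x *\<^sub>v col (lagrange_mat m x) j) $ i"
    using i j by (simp add: vandermonde_def lagrange_mat_def)
  also have "\<dots> = poly (lagrange_basis x {..<m} j) (x i)"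
    using degree_lagrange_basis[of "{..<m}" j x] i j
    by (simp add: col_lagrange_mat vandermonde_mult_coeffs)
  also have "\<dots> = 1\<^sub>m m $$ (i, j)"
    using poly_lagrange_basis[OF _ assms] i j by simp
  finally show "(vandermonde m x * lagrange_mat m x) $$ (i, j) = 1\<^sub>m m $$ (i, j)" .
qed (simp_all add: vandermonde_def lagrange_mat_def)

lemma mat_inv_vandermonde:
  assumes "inj_on x {..<m}"
  shows "mat_inv (vandermonde m x) = lagrange_mat m x"
proof (rule mat_inv_eqI)
  show "vandermonde m x \<in> carrier_mat m m" by (simp add: vandermonde_def)
qed (rule lagrange_mat_carrier, rule vandermonde_mult_lagrange_mat[OF assms])

lemma companion_carrier: "companion m c \<in> carrier_mat m m"
  by (simp add: companion_def)

lemma companion_mult_vec_index: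
  assumes i: "i < m" and v: "v \<in> carrier_vec m"
  shows "(companion m c *\<^sub>v v) $ i = c $ i * v $ (m - 1) + (if 0 < i then v $ (i - 1) else 0)"
proof -
  have "(companion m c *\<^sub>v v) $ i =
      (\<Sum>j<m. (if j = m - 1 then c $ i else if i = j + 1 then 1 else 0) * v $ j)"
    using i v unfolding companion_def by (simp add: scalar_prod_def atLeast0LessThan)
  also have "\<dots> = (\<Sum>j<m. (if j = m - 1 then c $ i * v $ j else 0) +
      (if 0 < i \<and> j = i - 1 then v $ j else 0))"
    using i by (intro sum.cong refl) auto
  also have "\<dots> = c $ i * v $ (m - 1) + (if 0 < i then v $ (i - 1) else 0)"
    using i by (simp add: sum.distrib)
  finally show ?thesis .
qed

lemma powers_sprod_companion_mult_vec:
  assumes m: "m \<ge> 1" and v: "v \<in> carrier_vec m"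
  shows "vec m (\<lambda>k. x ^ k) \<bullet> (companion m c *\<^sub>v v) =
    x * (vec m (\<lambda>k. x ^ k) \<bullet> v) + v $ (m - 1) * ((\<Sum>k<m. c $ k * x ^ k) - x ^ m)"
proof -
  obtain M where M: "m = Suc M" using m by (cases m) auto
  have Cv: "(companion m c *\<^sub>v v) $ k = c $ k * v $ M + (if 0 < k then v $ (k - 1) else 0)"
    if "k < m" for k
    using companion_mult_vec_index[OF that v] M by simp
  have "vec m (\<lambda>k. x ^ k) \<bullet> (companion m c *\<^sub>v v) = (\<Sum>k<m. x ^ k * (companion m c *\<^sub>v v) $ k)"
    by (simp add: scalar_prod_def atLeast0LessThan companion_def del: index_mult_mat_vec)
  also have "\<dots> = (\<Sum>k<m. x ^ k * (c $ k * v $ M + (if 0 < k then v $ (k - 1) else 0)))"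
    by (simp add: Cv del: index_mult_mat_vec)
  also have "\<dots> = v $ M * (\<Sum>k<m. c $ k * x ^ k) + (\<Sum>k<M. x ^ Suc k * v $ k)"
    unfolding M sum.lessThan_Suc_shift
    by (simp add: sum.distrib sum_distrib_left algebra_simps del: sum.lessThan_Suc)
  also have "\<dots> = x * (vec m (\<lambda>k. x ^ k) \<bullet> v) + v $ M * ((\<Sum>k<m. c $ k * x ^ k) - x ^ m)"
    using v unfolding M
    by (simp add: scalar_prod_def atLeast0LessThan sum_distrib_left algebra_simps)
  finally show ?thesis using M by simp
qed

lemma companion_eigenvector_last_nonzero:
  assumes v: "v \<in> carrier_vec m" "v \<noteq> 0\<^sub>v m" and eig: "companion m c *\<^sub>v v = x \<cdot>\<^sub>v v"
  shows "v $ (m - 1) \<noteq> 0"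
proof
  assume last: "v $ (m - 1) = 0"
  have shift: "v $ (i - 1) = x * v $ i" if "0 < i" "i < m" for i
  proof -
    have "x * v $ i = (companion m c *\<^sub>v v) $ i" using eig that v by simp
    then show ?thesis using companion_mult_vec_index[OF that(2) v(1)] last that by simp
  qed
  \<comment> \<open>With a vanishing last entry the eigenvector equations propagate zeros downwards.\<close>
  have zeros: "v $ (m - 1 - k) = 0" if "k < m" for k
    using that
  proof (induction k)
    case (Suc k)
    have "m - 1 - Suc k = (m - 1 - k) - 1" by simp
    then show ?case using shift[of "m - 1 - k"] Suc by simp
  qed (use last in simp)
  then have "v $ i = 0" if "i < m" for i
    using zeros[of "m - 1 - i"] that by simp
  then have "v = 0\<^sub>v m" using v(1) by (intro eq_vecI) auto
  then show False using v(2) by contradiction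
qed

lemma companion_eigenvalue_root:
  assumes m: "m \<ge> 1" and eig: "eigenvalue (companion m c) x"
  shows "x ^ m = (\<Sum>k<m. c $ k * x ^ k)"
proof -
  obtain v where v: "v \<in> carrier_vec m" "v \<noteq> 0\<^sub>v m" "companion m c *\<^sub>v v = x \<cdot>\<^sub>v v"
    using eig unfolding eigenvalue_def eigenvector_def by (auto simp: companion_def)
  have "vec m (\<lambda>k. x ^ k) \<bullet> (companion m c *\<^sub>v v) = x * (vec m (\<lambda>k. x ^ k) \<bullet> v)"
    unfolding v(3) using v(1) by (simp add: scalar_prod_smult_right)
  then have "v $ (m - 1) * ((\<Sum>k<m. c $ k * x ^ k) - x ^ m) = 0"
    using powers_sprod_companion_mult_vec[OF m v(1)] by simp
  then show ?thesis using companion_eigenvector_last_nonzero[OF v] by simp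
qed

lemma companion_mult_lagrange_col:
  assumes m: "m \<ge> 1" and inj: "inj_on x {..<m}" and j: "j < m"
    and roots: "\<forall>i<m. x i ^ m = (\<Sum>k<m. c $ k * x i ^ k)"
  shows "companion m c *\<^sub>v col (lagrange_mat m x) j = x j \<cdot>\<^sub>v col (lagrange_mat m x) j"
proof -
  define V where "V = vandermonde m x"
  define L where "L = lagrange_mat m x"
  define b where "b = col L j"
  have V: "V \<in> carrier_mat m m" unfolding V_def vandermonde_def by simp
  have L: "L \<in> carrier_mat m m" unfolding L_def by (rule lagrange_mat_carrier)
  have b: "b \<in> carrier_vec m" unfolding b_def using L by (metis carrier_matD(1) carrier_vecI dim_col)
  have Cb: "companion m c *\<^sub>v b \<in> carrier_vec m"
    using companion_carrier b by (rule mult_mat_vec_carrier)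
  have VL: "V * L = 1\<^sub>m m" unfolding V_def L_def using vandermonde_mult_lagrange_mat[OF inj] .
  have Vb: "V *\<^sub>v b = unit_vec m j"
    using col_mult2[OF V L j] VL j unfolding b_def by simp
  have row_V: "row V i = vec m (\<lambda>k. x i ^ k)" if "i < m" for i
    using that unfolding V_def vandermonde_def by auto
  \<comment> \<open>Each row of the Vandermonde matrix is a left eigenvector of the companion matrix.\<close>
  have "V *\<^sub>v (companion m c *\<^sub>v b) = V *\<^sub>v (x j \<cdot>\<^sub>v b)"
  proof (rule eq_vecI)
    fix i assume "i < dim_vec (V *\<^sub>v (x j \<cdot>\<^sub>v b))"
    then have i: "i < m" using V by simp
    have "(V *\<^sub>v (companion m c *\<^sub>v b)) $ i = x i * (V *\<^sub>v b) $ i"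
      using powers_sprod_companion_mult_vec[OF m b] roots i V Cb b by (simp add: row_V)
    also have "\<dots> = x j * (V *\<^sub>v b) $ i"
      unfolding Vb using i by (cases "i = j") (auto simp: unit_vec_def)
    also have "\<dots> = (V *\<^sub>v (x j \<cdot>\<^sub>v b)) $ i"
      using V b i by (simp add: mult_mat_vec)
    finally show "(V *\<^sub>v (companion m c *\<^sub>v b)) $ i = (V *\<^sub>v (x j \<cdot>\<^sub>v b)) $ i" .
  qed (use V in simp)
  then have "(L * V) *\<^sub>v (companion m c *\<^sub>v b) = (L * V) *\<^sub>v (x j \<cdot>\<^sub>v b)"
    using L V b Cb by (simp add: assoc_mult_mat_vec)
  then show ?thesis
    using mat_mult_left_right_inverse[OF V L VL] b Cb unfolding b_def L_def by simp
qed

lemma pow_mat_Suc_left: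
  assumes A: "A \<in> carrier_mat n n"
  shows "A ^\<^sub>m Suc k = A * A ^\<^sub>m k"
proof (induction k)
  case (Suc k)
  have "A ^\<^sub>m Suc (Suc k) = (A * A ^\<^sub>m k) * A" using Suc by simp
  also have "\<dots> = A * A ^\<^sub>m Suc k" using A by (simp add: assoc_mult_mat[of _ n n _ n _ n])
  finally show ?case .
qed (use A in simp)

lemma krylov_carrier:
  "A \<in> carrier_mat n n \<Longrightarrow> f1 \<in> carrier_vec n \<Longrightarrow> krylov A f1 i \<in> carrier_vec n"
  unfolding krylov_def by (metis mult_mat_vec_carrier pow_carrier_mat)

lemma krylov_Suc:
  assumes A: "A \<in> carrier_mat n n" and f1: "f1 \<in> carrier_vec n"
  shows "krylov A f1 (Suc i) = A *\<^sub>v krylov A f1 i"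
  unfolding krylov_def pow_mat_Suc_left[OF A]
  using A f1 by (simp add: assoc_mult_mat_vec[of A n n _ n])

lemma krylov_mat_carrier: "krylov_mat n A f1 m \<in> carrier_mat n m"
  unfolding krylov_mat_def using mat_of_cols_carrier[of n "map (krylov A f1) [0..<m]"] by simp

lemma krylov_mat_mult_vec_index:
  assumes y: "y \<in> carrier_vec m" and a: "a < n"
  shows "(krylov_mat n A f1 m *\<^sub>v y) $ a = (\<Sum>i<m. krylov A f1 i $ a * y $ i)"
  using assms krylov_mat_carrier[of n A f1 m]
  by (simp add: krylov_mat_def scalar_prod_def atLeast0LessThan mat_of_cols_index)

lemma mult_krylov_mat:
  assumes A: "A \<in> carrier_mat n n" and f1: "f1 \<in> carrier_vec n"
  shows "A * krylov_mat n A f1 m = mat_of_cols n (map (\<lambda>i. krylov A f1 (Suc i)) [0..<m])"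
proof (rule eq_matI)
  fix a i assume "a < dim_row (mat_of_cols n (map (\<lambda>i. krylov A f1 (Suc i)) [0..<m]))"
    "i < dim_col (mat_of_cols n (map (\<lambda>i. krylov A f1 (Suc i)) [0..<m]))"
  then have a: "a < n" and i: "i < m" by auto
  have "col (krylov_mat n A f1 m) i = krylov A f1 i"
    unfolding krylov_mat_def using i krylov_carrier[OF A f1] by simp
  then show "(A * krylov_mat n A f1 m) $$ (a, i) =
      mat_of_cols n (map (\<lambda>i. krylov A f1 (Suc i)) [0..<m]) $$ (a, i)"
    using A a i krylov_mat_carrier[of n A f1 m]
    by (simp add: mat_of_cols_index krylov_Suc[OF A f1])
qed (use A krylov_mat_carrier[of n A f1 m] in auto)

(* The relation A X_m = X_m C_m + r_(m+1) e_m^T of the paper, applied to a vector b. *)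
lemma krylov_decomposition:
  assumes A: "A \<in> carrier_mat n n" and f1: "f1 \<in> carrier_vec n" and m: "m \<ge> 1"
    and b: "b \<in> carrier_vec m" and c: "c \<in> carrier_vec m"
  shows "A *\<^sub>v (krylov_mat n A f1 m *\<^sub>v b) =
    krylov_mat n A f1 m *\<^sub>v (companion m c *\<^sub>v b) +
    b $ (m - 1) \<cdot>\<^sub>v (krylov A f1 m - krylov_mat n A f1 m *\<^sub>v c)"
proof (rule eq_vecI)
  obtain M where M: "m = Suc M" using m by (cases m) auto
  let ?X = "krylov_mat n A f1 m" and ?f = "krylov A f1"
  have X: "?X \<in> carrier_mat n m" by (rule krylov_mat_carrier)
  have Cb: "companion m c *\<^sub>v b \<in> carrier_vec m"
    using companion_carrier b by (rule mult_mat_vec_carrier)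
  fix a assume "a < dim_vec (?X *\<^sub>v (companion m c *\<^sub>v b) + b $ (m - 1) \<cdot>\<^sub>v (?f m - ?X *\<^sub>v c))"
  then have a: "a < n" using X by simp
  have "(A *\<^sub>v (?X *\<^sub>v b)) $ a = ((A * ?X) *\<^sub>v b) $ a"
    using A X b by (simp add: assoc_mult_mat_vec)
  also have "\<dots> = (\<Sum>i<m. ?f (Suc i) $ a * b $ i)"
    using a b unfolding mult_krylov_mat[OF A f1]
    by (simp add: scalar_prod_def atLeast0LessThan mat_of_cols_index)
  also have "\<dots> = (\<Sum>i<M. ?f (Suc i) $ a * b $ i) + b $ M * ?f m $ a"
    unfolding M by simp
  also have "\<dots> = (?X *\<^sub>v (companion m c *\<^sub>v b)) $ a + b $ M * (?f m - ?X *\<^sub>v c) $ a"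
  proof -
    have "(?X *\<^sub>v (companion m c *\<^sub>v b)) $ a =
        (\<Sum>i<m. ?f i $ a * (c $ i * b $ M + (if 0 < i then b $ (i - 1) else 0)))"
      using Cb a b M by (simp add: krylov_mat_mult_vec_index companion_mult_vec_index)
    also have "\<dots> = b $ M * (?X *\<^sub>v c) $ a + (\<Sum>i<M. ?f (Suc i) $ a * b $ i)"
      using a c unfolding M sum.lessThan_Suc_shift
      by (simp add: krylov_mat_mult_vec_index[OF c a, unfolded M] sum.distrib sum_distrib_left
          sum.lessThan_Suc_shift algebra_simps del: sum.lessThan_Suc)
    finally show ?thesis using a c X f1 krylov_carrier[OF A f1, of m] by (simp add: algebra_simps)
  qed
  finally show "(A *\<^sub>v (?X *\<^sub>v b)) $ a =
      (?X *\<^sub>v (companion m c *\<^sub>v b) + b $ (m - 1) \<cdot>\<^sub>v (?f m - ?X *\<^sub>v c)) $ a"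
    using a c X Cb krylov_carrier[OF A f1, of m] M by simp
qed (use A krylov_mat_carrier[of n A f1 m] in simp)

lemma vnorm2_smult: "vnorm2 (s \<cdot>\<^sub>v v) = cmod s * vnorm2 v"
proof -
  have "vnorm2 (s \<cdot>\<^sub>v v) = sqrt ((cmod s)\<^sup>2 * (\<Sum>i<dim_vec v. (cmod (v $ i))\<^sup>2))"
    unfolding vnorm2_def by (simp add: norm_mult power_mult_distrib sum_distrib_left)
  also have "\<dots> = cmod s * vnorm2 v" unfolding vnorm2_def by (simp add: real_sqrt_mult)
  finally show ?thesis .
qed

lemma krylov_ritz_pair:
  fixes A :: "complex mat" and f1 c b :: "complex vec" and n m :: nat
  defines "X \<equiv> krylov_mat n A f1 m"
  defines "r \<equiv> krylov A f1 m - X *\<^sub>v c"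
  assumes A: "A \<in> carrier_mat n n" and f1: "f1 \<in> carrier_vec n" and m: "m \<ge> 1"
    and c: "c \<in> carrier_vec m"
    and orth: "mat_adjoint X *\<^sub>v r = 0\<^sub>v m"
    and b: "b \<in> carrier_vec m" and nonzero: "X *\<^sub>v b \<noteq> 0\<^sub>v n"
    and eig: "companion m c *\<^sub>v b = \<mu> \<cdot>\<^sub>v b"
  shows "A *\<^sub>v (X *\<^sub>v b) - \<mu> \<cdot>\<^sub>v (X *\<^sub>v b) = b $ (m - 1) \<cdot>\<^sub>v r"
    and "ritz_pair A (col_space X) \<mu> (X *\<^sub>v b)"
proof -
  have X: "X \<in> carrier_mat n m" unfolding X_def by (rule krylov_mat_carrier)
  have r: "r \<in> carrier_vec n" unfolding r_def using X c krylov_carrier[OF A f1] by simp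
  have Xb: "X *\<^sub>v b \<in> carrier_vec n" using X b by simp
  have "A *\<^sub>v (X *\<^sub>v b) = \<mu> \<cdot>\<^sub>v (X *\<^sub>v b) + b $ (m - 1) \<cdot>\<^sub>v r"
    using krylov_decomposition[OF A f1 m b c] X b
    unfolding X_def[symmetric] r_def[symmetric] eig by (simp add: mult_mat_vec)
  then show residual: "A *\<^sub>v (X *\<^sub>v b) - \<mu> \<cdot>\<^sub>v (X *\<^sub>v b) = b $ (m - 1) \<cdot>\<^sub>v r"
    using Xb r X by (auto intro!: eq_vecI)
  have "X *\<^sub>v b \<in> col_space X" unfolding col_space_def using X b by auto
  moreover have "X *\<^sub>v b \<noteq> 0\<^sub>v (dim_vec (X *\<^sub>v b))"
    using nonzero X by simp
  moreover have "(A *\<^sub>v (X *\<^sub>v b) - \<mu> \<cdot>\<^sub>v (X *\<^sub>v b)) \<bullet>c u = 0" if "u \<in> col_space X" for u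
  proof -
    obtain y where y: "y \<in> carrier_vec m" and u: "u = X *\<^sub>v y"
      using \<open>u \<in> col_space X\<close> X unfolding col_space_def by auto
    have "(b $ (m - 1) \<cdot>\<^sub>v r) \<bullet>c (X *\<^sub>v y) = (mat_adjoint X *\<^sub>v (b $ (m - 1) \<cdot>\<^sub>v r)) \<bullet>c y"
      using cscalar_prod_mult_mat_vec[OF X _ y] r by simp
    also have "\<dots> = 0"
      using orth y by (simp add: mult_mat_vec[OF mat_adjoint_carrier[OF X] r])
    finally show ?thesis unfolding residual u .
  qed
  ultimately show "ritz_pair A (col_space X) \<mu> (X *\<^sub>v b)"
    unfolding ritz_pair_def by blast
qed

lemma ritz_pair_lagrange_col:
  fixes A :: "complex mat" and f1 c :: "complex vec" and n m j :: nat and lam :: "nat \<Rightarrow> complex"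
  defines "X \<equiv> krylov_mat n A f1 m"
  defines "r \<equiv> krylov A f1 m - X *\<^sub>v c"
  defines "w \<equiv> X *\<^sub>v col (lagrange_mat m lam) j"
  assumes A: "A \<in> carrier_mat n n" and f1: "f1 \<in> carrier_vec n" and m: "m \<ge> 1"
    and c: "c \<in> carrier_vec m"
    and rank: "vec_space.rank n X = m"
    and orth: "mat_adjoint X *\<^sub>v r = 0\<^sub>v m"
    and roots: "\<forall>i<m. lam i ^ m = (\<Sum>k<m. c $ k * lam i ^ k)"
    and distinct: "inj_on lam {..<m}" and j: "j < m"
  shows "ritz_pair A (col_space X) (lam j) w"
    and "A *\<^sub>v w - lam j \<cdot>\<^sub>v w = (1 / (\<Prod>k\<in>{..<m} - {j}. lam j - lam k)) \<cdot>\<^sub>v r"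
proof -
  let ?b = "col (lagrange_mat m lam) j"
  have b: "?b \<in> carrier_vec m" using j by (simp add: col_lagrange_mat)
  have last: "?b $ (m - 1) = 1 / (\<Prod>k\<in>{..<m} - {j}. lam j - lam k)"
    using coeff_lagrange_basis_top[of "{..<m}" j lam] j m by (simp add: col_lagrange_mat)
  have "?b $ (m - 1) \<noteq> 0"
    unfolding last using distinct j by (auto simp: inj_on_def)
  then have "X *\<^sub>v ?b \<noteq> 0\<^sub>v n"
    using vec_space.full_column_rank_mult_vec_eq_zero[OF krylov_mat_carrier rank[unfolded X_def] b] m
    unfolding X_def by auto
  note ritz = krylov_ritz_pair[OF A f1 m c orth[unfolded r_def X_def] b this[unfolded X_def]
      companion_mult_lagrange_col[OF m distinct j roots]]
  show "ritz_pair A (col_space X) (lam j) w"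
    using ritz(2) unfolding X_def w_def .
  show "A *\<^sub>v w - lam j \<cdot>\<^sub>v w = (1 / (\<Prod>k\<in>{..<m} - {j}. lam j - lam k)) \<cdot>\<^sub>v r"
    using ritz(1)[unfolded last] unfolding X_def w_def r_def .
qed

theorem mainTheorem1:
  fixes A :: "complex mat" and f1 :: "complex vec" and n m :: nat
    and lam :: "nat \<Rightarrow> complex"
  assumes A: "A \<in> carrier_mat n n"
    and f1: "f1 \<in> carrier_vec n"
    and m_pos: "m \<ge> 1"
    and full_rank: "vec_space.rank n (krylov_mat n A f1 m) = m"
    and eig: "\<forall>i<m. eigenvalue (companion m (pinv (krylov_mat n A f1 m) *\<^sub>v krylov A f1 m)) (lam i)"
    and distinct: "inj_on lam {..<m}"
  shows "let X = krylov_mat n A f1 m;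
             c = pinv X *\<^sub>v krylov A f1 m;
             r = krylov A f1 m - X *\<^sub>v c;
             W = X * mat_inv (vandermonde m lam)
         in \<forall>j<m. ritz_pair A (col_space X) (lam j) (col W j) \<and>
              vnorm2 (A *\<^sub>v col W j - lam j \<cdot>\<^sub>v col W j) / vnorm2 (col W j)
                = vnorm2 r / vnorm2 (col W j) * (\<Prod>k\<in>{..<m} - {j}. 1 / cmod (lam j - lam k))"
proof -
  let ?X = "krylov_mat n A f1 m"
  let ?c = "pinv ?X *\<^sub>v krylov A f1 m"
  let ?r = "krylov A f1 m - ?X *\<^sub>v ?c"
  let ?W = "?X * mat_inv (vandermonde m lam)"
  have X: "?X \<in> carrier_mat n m" by (rule krylov_mat_carrier)
  have f: "krylov A f1 m \<in> carrier_vec n" using A f1 by (rule krylov_carrier)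
  have c: "?c \<in> carrier_vec m" using pinv_normal_equations(1)[OF X full_rank] f by simp
  note orth = least_squares_residual_orthogonal[OF X f full_rank]
  have roots: "\<forall>i<m. lam i ^ m = (\<Sum>k<m. ?c $ k * lam i ^ k)"
    using companion_eigenvalue_root[OF m_pos] eig by blast
  have col_W: "col ?W j = ?X *\<^sub>v col (lagrange_mat m lam) j"
    if "j < m" for j
    using col_mult2[OF X lagrange_mat_carrier that] unfolding mat_inv_vandermonde[OF distinct] .
  show ?thesis unfolding Let_def
  proof (intro allI impI conjI)
    fix j assume j: "j < m"
    note ritz = ritz_pair_lagrange_col[OF A f1 m_pos c full_rank orth roots distinct j]
    show "ritz_pair A (col_space ?X) (lam j) (col ?W j)"
      unfolding col_W[OF j] by (rule ritz(1))
    show "vnorm2 (A *\<^sub>v col ?W j - lam j \<cdot>\<^sub>v col ?W j) / vnorm2 (col ?W j) =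
        vnorm2 ?r / vnorm2 (col ?W j) * (\<Prod>k\<in>{..<m} - {j}. 1 / cmod (lam j - lam k))"
      unfolding col_W[OF j] ritz(2) vnorm2_smult
      by (simp add: norm_divide prod_norm[symmetric] prod_dividef)
  qed
qed

end
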